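(* Let $(\Omega,\mathcal{F},P)=([0,1],\mathcal{B}([0,1]),\lambda)$ with $\lambda$ Lebesgue measure. Let $(\varepsilon_n)\subset(0,1)$ with $\varepsilon_n\to0$, and let $S^n_1(\omega)=-\frac{1}{\sqrt{\omega}}$ for $\omega\in[0,\varepsilon_n)$ and $S^n_1(\omega)=\frac{1}{(1-\omega)^{1/(n+1)}}$ for $\omega\in[\varepsilon_n,1]$, where $(\varepsilon_n)$ is chosen such that $E[S^n_1]=1$ for all $n$. Then there is no probability measure $Q\sim\lambda$ such that $E_Q[S^n_1]=0$ for all $n\in\mathbb{N}$. *)

theory Defs
  imports "HOL-Probability.Probability"
begin

definition P01 :: "real measure" where
  "P01 = restrict_space lborel {0..1}"

text \<open>The random variable S^n_1, depending on the sequence eps.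
  Values at the null points 0 and 1 are irrelevant (Isabelle: x/0 = 0).\<close>
definition S1 :: "(nat \<Rightarrow> real) \<Rightarrow> nat \<Rightarrow> real \<Rightarrow> real" where
  "S1 eps n \<omega> = (if \<omega> < eps n then - 1 / sqrt \<omega>
                   else 1 / ((1 - \<omega>) powr (1 / (real n + 1))))"

definition equiv_measure :: "'a measure \<Rightarrow> 'a measure \<Rightarrow> bool" where
  "equiv_measure Q M \<longleftrightarrow> sets Q = sets M \<and>
     (\<forall>A\<in>sets M. emeasure Q A = 0 \<longleftrightarrow> emeasure M A = 0)"

end

theory Submission
  imports Defs "HOL-Real_Asymp.Real_Asymp"
begin

text \<open>Under Q the variables S1 eps n converge to 1 almost surely: eps n \<rightarrow> 0 pushes every
  \<omega> \<in> (0,1) into the branch (1 - \<omega>) powr (-1/(n+1)) \<rightarrow> 1. They are dominated by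
  1/sqrt \<omega> + 1/sqrt (1 - \<omega>), and this envelope is bounded by \<bar>S1 eps 1\<bar> plus a constant,
  hence Q-integrable. Dominated convergence gives E_Q[S1 eps n] \<rightarrow> 1, contradicting
  E_Q[S1 eps n] = 0.\<close>

lemma AE_equiv_measure:
  assumes "equiv_measure Q M" and "AE x in M. P x"
  shows "AE x in Q. P x"
proof -
  from \<open>AE x in M. P x\<close> obtain N where
    N: "{x \<in> space M. \<not> P x} \<subseteq> N" "emeasure M N = 0" "N \<in> sets M"
    by (auto elim: AE_E)
  have sets: "sets Q = sets M" using assms(1) by (simp add: equiv_measure_def)
  have "emeasure Q N = 0" using assms(1) N by (simp add: equiv_measure_def)
  then show ?thesis
    using N sets sets_eq_imp_space_eq[OF sets] by (intro AE_I[of _ _ N]) auto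
qed

lemma AE_P01_interior: "AE x in P01. 0 < x \<and> x < 1"
proof (rule AE_I')
  show "{0, 1} \<in> null_sets P01"
    unfolding P01_def
    by (auto simp: null_sets_def sets_restrict_space_iff emeasure_restrict_space
             intro: emeasure_lborel_countable)
qed (auto simp: P01_def)

lemma abs_S1_le_envelope:
  assumes "0 \<le> w" "w \<le> 1" "n \<ge> 1"
  shows "\<bar>S1 eps n w\<bar> \<le> 1 / sqrt w + 1 / sqrt (1 - w)"
proof (cases "w < eps n \<or> w = 1")
  case True
  then show ?thesis using assms by (auto simp: S1_def)
next
  case False
  then have pos: "0 < 1 - w" "1 - w \<le> 1" using assms by auto
  have "1 / (real n + 1) \<le> 1 / 2" using assms by (simp add: field_simps)
  then have "sqrt (1 - w) \<le> (1 - w) powr (1 / (real n + 1))"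
    using pos by (simp add: powr_half_sqrt[symmetric] powr_mono')
  then have "\<bar>S1 eps n w\<bar> \<le> 1 / sqrt (1 - w)"
    using False pos by (simp add: S1_def frac_le)
  then show ?thesis using assms by (simp add: add_increasing)
qed

lemma envelope_le_abs_S1_1:
  assumes "0 \<le> w" "w \<le> 1" "0 < eps 1" "eps 1 < 1"
  shows "1 / sqrt w + 1 / sqrt (1 - w) \<le>
           \<bar>S1 eps 1 w\<bar> + (1 / sqrt (eps 1) + 1 / sqrt (1 - eps 1))"
proof (cases "w < eps 1")
  case True
  have "1 / sqrt (1 - w) \<le> 1 / sqrt (1 - eps 1)"
    using True assms by (intro divide_left_mono) auto
  moreover have "\<bar>S1 eps 1 w\<bar> = 1 / sqrt w" using True assms by (simp add: S1_def)
  moreover have "0 \<le> 1 / sqrt (eps 1)" using assms by simp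
  ultimately show ?thesis by linarith
next
  case False
  have "1 / sqrt w \<le> 1 / sqrt (eps 1)"
    using False assms by (intro divide_left_mono) auto
  moreover have "\<bar>S1 eps 1 w\<bar> = 1 / sqrt (1 - w)"
    using False assms by (simp add: S1_def powr_half_sqrt)
  moreover have "0 \<le> 1 / sqrt (1 - eps 1)" using assms by simp
  ultimately show ?thesis by linarith
qed

lemma S1_tendsto_1:
  assumes "eps \<longlonglongrightarrow> 0" "0 < x" "x < 1"
  shows "(\<lambda>n. S1 eps n x) \<longlonglongrightarrow> 1"
proof -
  have "\<forall>\<^sub>F n in sequentially. eps n < x"
    using assms by (intro order_tendstoD(2)) auto
  then have ev: "\<forall>\<^sub>F n in sequentially. 1 / ((1 - x) powr (1 / (real n + 1))) = S1 eps n x"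
    by eventually_elim (auto simp: S1_def)
  have "(\<lambda>n. 1 / (real n + 1)) \<longlonglongrightarrow> 0"
    by real_asymp
  then have "(\<lambda>n. 1 / ((1 - x) powr (1 / (real n + 1)))) \<longlonglongrightarrow> 1 / (1 - x) powr 0"
    using assms by (intro tendsto_intros) auto
  then show ?thesis
    using assms by (simp add: tendsto_cong[OF ev, symmetric])
qed

theorem lemma6p3:
  fixes eps :: "nat \<Rightarrow> real"
  assumes eps_range: "\<And>n. n \<ge> 1 \<Longrightarrow> 0 < eps n \<and> eps n < 1"
    and eps_lim: "eps \<longlonglongrightarrow> 0"
    and mean_one: "\<And>n. n \<ge> 1 \<Longrightarrow> integrable P01 (S1 eps n) \<and> integral\<^sup>L P01 (S1 eps n) = 1"
  shows "\<not> (\<exists>Q :: real measure. prob_space Q \<and> equiv_measure Q P01 \<and>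
            (\<forall>n\<ge>1. integrable Q (S1 eps n) \<and> integral\<^sup>L Q (S1 eps n) = 0))"
proof
  assume "\<exists>Q :: real measure. prob_space Q \<and> equiv_measure Q P01 \<and>
            (\<forall>n\<ge>1. integrable Q (S1 eps n) \<and> integral\<^sup>L Q (S1 eps n) = 0)"
  then obtain Q :: "real measure" where Q: "prob_space Q" "equiv_measure Q P01"
    and S1_Q: "\<And>n. n \<ge> 1 \<Longrightarrow> integrable Q (S1 eps n) \<and> integral\<^sup>L Q (S1 eps n) = 0"
    by blast
  have interior: "AE x in Q. 0 < x \<and> x < 1"
    using AE_equiv_measure[OF Q(2) AE_P01_interior] .
  define C where "C = 1 / sqrt (eps 1) + 1 / sqrt (1 - eps 1)"
  have "integrable Q (\<lambda>x. \<bar>S1 eps 1 x\<bar> + C)"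
    using S1_Q[of 1] prob_space.finite_measure[OF Q(1)] by (auto intro: finite_measure.integrable_const)
  then have "(\<lambda>n. integral\<^sup>L Q (S1 eps (Suc n))) \<longlonglongrightarrow> integral\<^sup>L Q (\<lambda>x. 1)"
  proof (rule integral_dominated_convergence[rotated 2])
    show "AE x in Q. norm (S1 eps (Suc n) x) \<le> \<bar>S1 eps 1 x\<bar> + C" for n
      using interior
    proof eventually_elim
      case (elim x)
      then have "\<bar>S1 eps (Suc n) x\<bar> \<le> 1 / sqrt x + 1 / sqrt (1 - x)"
        by (intro abs_S1_le_envelope) auto
      also have "\<dots> \<le> \<bar>S1 eps 1 x\<bar> + C"
        unfolding C_def using elim eps_range[of 1] by (intro envelope_le_abs_S1_1) auto
      finally show ?case by simp
    qed
    show "AE x in Q. (\<lambda>n. S1 eps (Suc n) x) \<longlonglongrightarrow> 1"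
      using interior by eventually_elim (intro LIMSEQ_Suc S1_tendsto_1[OF eps_lim]; simp)
  qed (use S1_Q in auto)
  then have "(\<lambda>n. 0 :: real) \<longlonglongrightarrow> 1"
    using S1_Q prob_space.prob_space[OF Q(1)] by simp
  then show False
    using LIMSEQ_unique[OF tendsto_const] by fastforce
qed

end
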